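(* Let $\alpha>0$, $0<p<1$ and $\beta_1,\beta_2,\beta_3>0$. Let $V_1,V_2,V_3$ be independent random variables with $V_i\sim EDW(\alpha,p,\beta_i)$, and set $X_1=\max\{V_1,V_3\}$, $X_2=\max\{V_2,V_3\}$. Then for $x_1,x_2\in\mathbb{N}_0$ the joint probability mass function $f_{X_1,X_2}(x_1,x_2)=P(X_1=x_1,X_2=x_2)$ is $$f_{X_1,X_2}(x_1,x_2)=\begin{cases} f_{EDW}(x_1;\alpha,p,\beta_1+\beta_3)\,f_{EDW}(x_2;\alpha,p,\beta_2) & \text{if } x_1<x_2,\\ f_{EDW}(x_1;\alpha,p,\beta_1)\,f_{EDW}(x_2;\alpha,p,\beta_2+\beta_3) & \text{if } x_2<x_1,\\ [1-p^{(x+1)^{\alpha}}]^{\beta_1}f_{EDW}(x;\alpha,p,\beta_2+\beta_3)-[1-p^{x^{\alpha}}]^{\beta_1+\beta_3}f_{EDW}(x;\alpha,p,\beta_2) & \text{if } x_1=x_2=x.\end{cases}$$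
   Context: The exponentiated discrete Weibull distribution $EDW(\alpha,p,\beta)$ ($\alpha,\beta>0$, $0<p<1$) is the distribution on $\mathbb{N}_0=\{0,1,2,\dots\}$ with cumulative distribution function $F_{EDW}(x;\alpha,p,\beta)=[1-p^{([x]+1)^{\alpha}}]^{\beta}$ for real $x\ge 0$, where $[x]$ is the largest integer $\le x$; its probability mass function is $f_{EDW}(x;\alpha,p,\beta)=[1-p^{(x+1)^{\alpha}}]^{\beta}-[1-p^{x^{\alpha}}]^{\beta}$, $x\in\mathbb{N}_0$ (with $p^{0}=1$). *)

theory Defs
  imports "HOL-Probability.Probability"
begin

definition F_EDW :: "real \<Rightarrow> real \<Rightarrow> real \<Rightarrow> nat \<Rightarrow> real" where
  "F_EDW \<alpha> p \<beta> x = (1 - p powr ((real x + 1) powr \<alpha>)) powr \<beta>"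

definition f_EDW :: "real \<Rightarrow> real \<Rightarrow> real \<Rightarrow> nat \<Rightarrow> real" where
  "f_EDW \<alpha> p \<beta> x =
     (1 - p powr ((real x + 1) powr \<alpha>)) powr \<beta> - (1 - p powr (real x powr \<alpha>)) powr \<beta>"

end

theory Submission
  imports Defs
begin

text \<open>Write \<open>G\<^sub>\<beta>(k) = P(V < k)\<close> for \<open>V \<sim> EDW(\<alpha>,p,\<beta>)\<close>; then \<open>G\<^sub>\<beta>\<^sub>+\<^sub>\<gamma> = G\<^sub>\<beta> G\<^sub>\<gamma>\<close>.
  Since \<open>max V\<^sub>1 V\<^sub>3 < a\<close> and \<open>max V\<^sub>2 V\<^sub>3 < b\<close> hold iff \<open>V\<^sub>1 < a\<close>, \<open>V\<^sub>2 < b\<close> and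
  \<open>V\<^sub>3 < min a b\<close>, independence gives the joint distribution function
  \<open>P(X\<^sub>1 < a, X\<^sub>2 < b) = G\<^sub>\<beta>\<^sub>1(a) G\<^sub>\<beta>\<^sub>2(b) G\<^sub>\<beta>\<^sub>3(min a b)\<close>. The joint mass function is the
  second difference of this function over the unit square at \<open>(x\<^sub>1, x\<^sub>2)\<close>; in each of the
  three cases the minima are explicit and the factors regroup into the stated products.\<close>

definition EDW_below :: "real \<Rightarrow> real \<Rightarrow> real \<Rightarrow> nat \<Rightarrow> real" where
  "EDW_below \<alpha> p \<beta> k = (1 - p powr (real k powr \<alpha>)) powr \<beta>"

lemma EDW_below_0: "p > 0 \<Longrightarrow> EDW_below \<alpha> p \<beta> 0 = 0"
  by (simp add: EDW_below_def)

lemma EDW_below_add: "EDW_below \<alpha> p (\<beta> + \<gamma>) k = EDW_below \<alpha> p \<beta> k * EDW_below \<alpha> p \<gamma> k"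
  by (simp add: EDW_below_def powr_add)

lemma f_EDW_eq_EDW_below_diff:
  "f_EDW \<alpha> p \<beta> x = EDW_below \<alpha> p \<beta> (Suc x) - EDW_below \<alpha> p \<beta> x"
  by (simp add: f_EDW_def EDW_below_def add.commute)

lemma measurable_max_count_space:
  fixes f g :: "'a \<Rightarrow> 'b :: {countable, linorder}"
  assumes "f \<in> M \<rightarrow>\<^sub>M count_space UNIV" and "g \<in> M \<rightarrow>\<^sub>M count_space UNIV"
  shows "(\<lambda>x. max (f x) (g x)) \<in> M \<rightarrow>\<^sub>M count_space UNIV"
proof -
  have "(\<lambda>x. max a (g x)) \<in> M \<rightarrow>\<^sub>M count_space UNIV" for a
    by (rule measurable_compose_countable[OF measurable_count_space_const assms(2)])
  then show ?thesis
    by (rule measurable_compose_countable[OF _ assms(1)])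
qed

lemma (in finite_measure) measure_less_eq_telescope:
  fixes X :: "'a \<Rightarrow> nat"
  assumes X: "X \<in> measurable M (count_space UNIV)"
    and pmf: "\<And>x. measure M {\<omega> \<in> space M. X \<omega> = x} = G (Suc x) - G x"
    and "G 0 = 0"
  shows "measure M {\<omega> \<in> space M. X \<omega> < k} = G k"
proof (induction k)
  case 0
  then show ?case using \<open>G 0 = 0\<close> by simp
next
  case (Suc k)
  have split: "{\<omega> \<in> space M. X \<omega> < Suc k} = {\<omega> \<in> space M. X \<omega> < k} \<union> {\<omega> \<in> space M. X \<omega> = k}"
    by auto
  have "{\<omega> \<in> space M. X \<omega> < k} \<in> sets M" "{\<omega> \<in> space M. X \<omega> = k} \<in> sets M"
    using X by measurable
  then have "measure M {\<omega> \<in> space M. X \<omega> < Suc k}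
      = measure M {\<omega> \<in> space M. X \<omega> < k} + measure M {\<omega> \<in> space M. X \<omega> = k}"
    unfolding split by (rule finite_measure_Union) auto
  then show ?case using Suc pmf[of k] by simp
qed

lemma (in finite_measure) measure_eq_pair_second_difference:
  fixes X Y :: "'a \<Rightarrow> nat"
  assumes "X \<in> measurable M (count_space UNIV)" and "Y \<in> measurable M (count_space UNIV)"
  defines "H a b \<equiv> measure M {\<omega> \<in> space M. X \<omega> < a \<and> Y \<omega> < b}"
  shows "measure M {\<omega> \<in> space M. X \<omega> = x \<and> Y \<omega> = y}
    = H (Suc x) (Suc y) - H x (Suc y) - H (Suc x) y + H x y"
proof -
  define S where "S a b = {\<omega> \<in> space M. X \<omega> < a \<and> Y \<omega> < b}" for a b
  have S_sets: "S a b \<in> sets M" for a b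
    unfolding S_def using assms(1,2) by measurable
  have "{\<omega> \<in> space M. X \<omega> = x \<and> Y \<omega> = y} = S (Suc x) (Suc y) - (S x (Suc y) \<union> S (Suc x) y)"
    by (auto simp: S_def)
  moreover have "S x (Suc y) \<union> S (Suc x) y \<subseteq> S (Suc x) (Suc y)"
    by (auto simp: S_def)
  moreover have "S x (Suc y) \<inter> S (Suc x) y = S x y"
    by (auto simp: S_def)
  ultimately show ?thesis
    using S_sets measure_Un3[of "S x (Suc y)" M "S (Suc x) y"]
    by (simp add: finite_measure_Diff fmeasurable_eq_sets H_def flip: S_def)
qed

lemma (in prob_space) prob_max_shared_less:
  fixes V :: "nat \<Rightarrow> 'a \<Rightarrow> 'b :: linorder"
  assumes "indep_vars (\<lambda>_. count_space UNIV) V {1, 2, 3}"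
  shows "prob {\<omega> \<in> space M. max (V 1 \<omega>) (V 3 \<omega>) < a \<and> max (V 2 \<omega>) (V 3 \<omega>) < b}
    = prob {\<omega> \<in> space M. V 1 \<omega> < a} * prob {\<omega> \<in> space M. V 2 \<omega> < b}
      * prob {\<omega> \<in> space M. V 3 \<omega> < min a b}"
proof -
  define c where "c i = (if i = (1::nat) then a else if i = 2 then b else min a b)" for i
  have vimage: "V i -` {..<x} \<inter> space M = {\<omega> \<in> space M. V i \<omega> < x}" for i x
    by auto
  have "prob {\<omega> \<in> space M. max (V 1 \<omega>) (V 3 \<omega>) < a \<and> max (V 2 \<omega>) (V 3 \<omega>) < b}
      = prob (\<Inter>i\<in>{1,2,3}. V i -` {..<c i} \<inter> space M)"
    by (rule arg_cong[where f = prob]) (auto simp: c_def)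
  also have "\<dots> = (\<Prod>i\<in>{1,2,3}. prob (V i -` {..<c i} \<inter> space M))"
    by (rule indep_varsD_finite[OF assms]) auto
  finally show ?thesis
    unfolding vimage by (simp add: c_def)
qed

lemma (in prob_space) prob_max_shared_eq:
  fixes V :: "nat \<Rightarrow> 'a \<Rightarrow> nat"
  assumes indep: "indep_vars (\<lambda>_. count_space UNIV) V {1, 2, 3}"
    and G1: "\<And>k. prob {\<omega> \<in> space M. V 1 \<omega> < k} = G1 k"
    and G2: "\<And>k. prob {\<omega> \<in> space M. V 2 \<omega> < k} = G2 k"
    and G3: "\<And>k. prob {\<omega> \<in> space M. V 3 \<omega> < k} = G3 k"
  shows "prob {\<omega> \<in> space M. max (V 1 \<omega>) (V 3 \<omega>) = x1 \<and> max (V 2 \<omega>) (V 3 \<omega>) = x2} =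
    (if x1 < x2 then (G1 (Suc x1) * G3 (Suc x1) - G1 x1 * G3 x1) * (G2 (Suc x2) - G2 x2)
     else if x2 < x1 then (G1 (Suc x1) - G1 x1) * (G2 (Suc x2) * G3 (Suc x2) - G2 x2 * G3 x2)
     else G1 (Suc x1) * (G2 (Suc x1) * G3 (Suc x1) - G2 x1 * G3 x1)
          - G1 x1 * G3 x1 * (G2 (Suc x1) - G2 x1))"
proof -
  have V_meas: "V i \<in> measurable M (count_space UNIV)" if "i \<in> {1, 2, 3}" for i
    using indep that unfolding indep_vars_def by auto
  have joint: "prob {\<omega> \<in> space M. max (V 1 \<omega>) (V 3 \<omega>) < a \<and> max (V 2 \<omega>) (V 3 \<omega>) < b}
      = G1 a * G2 b * G3 (min a b)" for a b
    by (simp only: prob_max_shared_less[OF indep] G1 G2 G3)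
  from measure_eq_pair_second_difference[OF measurable_max_count_space measurable_max_count_space,
      OF V_meas V_meas V_meas V_meas, of 1 3 2 3]
  have pmf: "prob {\<omega> \<in> space M. max (V 1 \<omega>) (V 3 \<omega>) = x1 \<and> max (V 2 \<omega>) (V 3 \<omega>) = x2}
      = G1 (Suc x1) * G2 (Suc x2) * G3 (min (Suc x1) (Suc x2))
        - G1 x1 * G2 (Suc x2) * G3 (min x1 (Suc x2))
        - G1 (Suc x1) * G2 x2 * G3 (min (Suc x1) x2)
        + G1 x1 * G2 x2 * G3 (min x1 x2)"
    by (simp only: joint insert_iff simp_thms)
  show ?thesis
  proof (cases x1 x2 rule: linorder_cases)
    case less
    then have "min (Suc x1) (Suc x2) = Suc x1" "min x1 (Suc x2) = x1"
      "min (Suc x1) x2 = Suc x1" "min x1 x2 = x1" by auto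
    with less show ?thesis unfolding pmf by (simp add: algebra_simps)
  next
    case greater
    then have "min (Suc x1) (Suc x2) = Suc x2" "min x1 (Suc x2) = Suc x2"
      "min (Suc x1) x2 = x2" "min x1 x2 = x2" by auto
    with greater show ?thesis unfolding pmf by (simp add: algebra_simps)
  next
    case equal
    then show ?thesis unfolding pmf by (simp add: algebra_simps)
  qed
qed

lemma (in prob_space) prob_less_EDW:
  fixes X :: "'a \<Rightarrow> nat"
  assumes "X \<in> measurable M (count_space UNIV)" and "p > 0"
    and "\<And>x. prob {\<omega> \<in> space M. X \<omega> = x} = f_EDW \<alpha> p \<beta> x"
  shows "prob {\<omega> \<in> space M. X \<omega> < k} = EDW_below \<alpha> p \<beta> k"
  using measure_less_eq_telescope[OF assms(1)] assms(3) EDW_below_0[OF \<open>p > 0\<close>]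
  by (simp add: f_EDW_eq_EDW_below_diff)

theorem mainTheorem2:
  fixes M :: "'a measure" and V :: "nat \<Rightarrow> 'a \<Rightarrow> nat"
    and \<alpha> p \<beta>1 \<beta>2 \<beta>3 :: real and x1 x2 :: nat
  assumes "prob_space M"
    and "\<alpha> > 0" and "0 < p" and "p < 1"
    and "\<beta>1 > 0" and "\<beta>2 > 0" and "\<beta>3 > 0"
    and "prob_space.indep_vars M (\<lambda>_. count_space UNIV) V {1, 2, 3}"
    and "\<And>x. measure M {\<omega> \<in> space M. V 1 \<omega> = x} = f_EDW \<alpha> p \<beta>1 x"
    and "\<And>x. measure M {\<omega> \<in> space M. V 2 \<omega> = x} = f_EDW \<alpha> p \<beta>2 x"
    and "\<And>x. measure M {\<omega> \<in> space M. V 3 \<omega> = x} = f_EDW \<alpha> p \<beta>3 x"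
  shows "measure M {\<omega> \<in> space M. max (V 1 \<omega>) (V 3 \<omega>) = x1 \<and> max (V 2 \<omega>) (V 3 \<omega>) = x2} =
    (if x1 < x2 then f_EDW \<alpha> p (\<beta>1 + \<beta>3) x1 * f_EDW \<alpha> p \<beta>2 x2
     else if x2 < x1 then f_EDW \<alpha> p \<beta>1 x1 * f_EDW \<alpha> p (\<beta>2 + \<beta>3) x2
     else (1 - p powr ((real x1 + 1) powr \<alpha>)) powr \<beta>1 * f_EDW \<alpha> p (\<beta>2 + \<beta>3) x1
          - (1 - p powr (real x1 powr \<alpha>)) powr (\<beta>1 + \<beta>3) * f_EDW \<alpha> p \<beta>2 x1)"
proof -
  interpret prob_space M by fact
  have indep: "indep_vars (\<lambda>_. count_space UNIV) V {1, 2, 3}" using assms(8) by simp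
  then have "V i \<in> measurable M (count_space UNIV)" if "i \<in> {1, 2, 3}" for i
    using that unfolding indep_vars_def by auto
  then have "prob {\<omega> \<in> space M. V 1 \<omega> < k} = EDW_below \<alpha> p \<beta>1 k"
    and "prob {\<omega> \<in> space M. V 2 \<omega> < k} = EDW_below \<alpha> p \<beta>2 k"
    and "prob {\<omega> \<in> space M. V 3 \<omega> < k} = EDW_below \<alpha> p \<beta>3 k" for k
    using prob_less_EDW \<open>0 < p\<close> assms(9-11) by auto
  note pmf = prob_max_shared_eq[OF indep this]
  have factors: "(1 - p powr ((real x + 1) powr \<alpha>)) powr \<beta> = EDW_below \<alpha> p \<beta> (Suc x)"
    "(1 - p powr (real x powr \<alpha>)) powr \<beta> = EDW_below \<alpha> p \<beta> x" for x \<beta>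
    by (simp_all add: EDW_below_def add.commute)
  show ?thesis
    unfolding pmf factors f_EDW_eq_EDW_below_diff EDW_below_add by simp
qed

end
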